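(* Let $r=[r_0,\ldots,r_m]$ and $c=[c_0,\ldots,c_n]$ be selections of rows and columns of the Pascal upper triangular matrix $T$, and let $\{\hat r,\hat c\}$ be an ordered sub-pair of $\{r,c\}$ of length $p+1$, with strictly increasing index sequences $\alpha=[\alpha_0,\ldots,\alpha_p]\subseteq\{0,\ldots,m\}$ and $\beta=[\beta_0,\ldots,\beta_p]\subseteq\{0,\ldots,n\}$ such that $\hat r_i=r_{\alpha_i}$ and $\hat c_i=c_{\beta_i}$. Let $I_{\hat r,\hat c}$ be the $(m+1)\times(n+1)$ matrix (rows and columns indexed from $0$) with entry $1$ at positions $(\alpha_i,\beta_i)$ for $i=0,\ldots,p$ and all other entries $0$. Then $\operatorname{rank}(T_{\hat r,\hat c})=\operatorname{rank}(I_{\hat r,\hat c})=p+1$. If moreover $\{\hat r,\hat c\}$ is maximal, then $\operatorname{rank}(T_{r,c})=\operatorname{rank}(I_{\hat r,\hat c})$.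
   Context: The Pascal upper triangular matrix is the infinite matrix $T=(T_{i,j})_{i,j\ge 0}$ with $T_{i,j}=\binom{j}{i}$, where $\binom{j}{i}:=0$ if $i>j$ (rows and columns indexed from $0$). A selection of rows (resp. columns) is a strictly increasing finite sequence of nonnegative integers. For selections $r=[r_0,\ldots,r_m]$ and $c=[c_0,\ldots,c_n]$, $T_{r,c}$ denotes the $(m+1)\times(n+1)$ matrix whose $(i,j)$ entry is $\binom{c_j}{r_i}$. A pair $\{\hat r,\hat c\}$ is an ordered sub-pair of $\{r,c\}$ of length $p+1$ if $\hat r=[\hat r_0,\ldots,\hat r_p]$ is a subsequence of $r$, $\hat c=[\hat c_0,\ldots,\hat c_p]$ is a subsequence of $c$, and $\hat r_i\le \hat c_i$ for all $i=0,\ldots,p$ (the empty pair has length $0$). It is maximal if no ordered sub-pair of $\{r,c\}$ has length greater than $p+1$. *)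

theory Defs
  imports "Jordan_Normal_Form.DL_Rank"
begin

definition mrank :: "real mat \<Rightarrow> nat" where
  "mrank A = vec_space.rank (dim_row A) A"

definition selection :: "nat list \<Rightarrow> bool" where
  "selection s \<longleftrightarrow> sorted_wrt (<) s"

definition pascal_sub :: "nat list \<Rightarrow> nat list \<Rightarrow> real mat" where
  "pascal_sub r c = mat (length r) (length c) (\<lambda>(i,j). real ((c ! j) choose (r ! i)))"

definition ordered_subpair_idx :: "nat list \<Rightarrow> nat list \<Rightarrow> nat list \<Rightarrow> nat list \<Rightarrow> bool" where
  "ordered_subpair_idx r c \<alpha> \<beta> \<longleftrightarrow>
     length \<alpha> = length \<beta> \<and>
     sorted_wrt (<) \<alpha> \<and> sorted_wrt (<) \<beta> \<and>
     (\<forall>k\<in>set \<alpha>. k < length r) \<and> (\<forall>k\<in>set \<beta>. k < length c) \<and>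
     (\<forall>i<length \<alpha>. r ! (\<alpha> ! i) \<le> c ! (\<beta> ! i))"

definition maximal_subpair_idx :: "nat list \<Rightarrow> nat list \<Rightarrow> nat list \<Rightarrow> nat list \<Rightarrow> bool" where
  "maximal_subpair_idx r c \<alpha> \<beta> \<longleftrightarrow>
     ordered_subpair_idx r c \<alpha> \<beta> \<and>
     (\<forall>\<alpha>' \<beta>'. ordered_subpair_idx r c \<alpha>' \<beta>' \<longrightarrow> length \<alpha>' \<le> length \<alpha>)"

definition I_mat :: "nat list \<Rightarrow> nat list \<Rightarrow> nat list \<Rightarrow> nat list \<Rightarrow> real mat" where
  "I_mat r c \<alpha> \<beta> = mat (length r) (length c)
     (\<lambda>(i,j). if \<exists>k<length \<alpha>. \<alpha> ! k = i \<and> \<beta> ! k = j then 1 else 0)"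

end

(*
  Put the column sums binom(t, r_i), a_j <= t < b_j, of the Pascal matrix over disjoint increasing
  intervals [a_j, b_j) into rows; the transpose of T_{r,c} is the case of the unit intervals
  [c_j, c_j + 1). Such a matrix has nonnegative determinant, positive when r_j < b_j for all j.
  This goes by induction on the dimension and then on the total interval length plus the sum of
  the r_i: a long interval is split in two, the determinant being additive in that row; for unit
  intervals either r_0 = 0, and subtracting from each row its predecessor leaves, by the
  hockey-stick identity, an interval matrix of smaller dimension; or a_0 = 0 and the first row
  vanishes; or binom(a, r) = (a / r) binom(a - 1, r - 1) shifts all a_j and r_i down by one.

  So T_{r^,c^} is nonsingular of order p + 1, and so is the identity minor of the 0/1 matrix I,
  which is a sum of p + 1 rank-one matrices. If the sub-pair is maximal of length q, the first
  q + 1 rows and the last q + 1 columns of T_{r,c} do not form an ordered sub-pair, so some r_k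
  exceeds c_{n-q+k}; then T_{r,c} vanishes on rows >= k and columns < n + 1 - q + k, which
  bounds its rank by q.
*)

theory Submission
  imports Defs "Jordan_Normal_Form.DL_Rank_Submatrix" "HOL-Library.Product_Lexorder"
begin

section \<open>Sorted index lists\<close>

lemma sorted_wrt_less_nth_0_le:
  assumes "sorted_wrt (<) xs" "x \<in> set xs"
  shows "xs!0 \<le> (x::'a::linorder)"
proof -
  obtain k where "k < length xs" "x = xs!k" using assms(2) by (auto simp: in_set_conv_nth)
  then show ?thesis using assms(1) by (cases k) (auto simp: sorted_wrt_nth_less less_imp_le)
qed

lemma sorted_wrt_map_pred:
  "\<forall>r\<in>set R. 0 < r \<Longrightarrow> sorted_wrt (<) R \<Longrightarrow> sorted_wrt (<) (map (\<lambda>r. r - 1) (R::nat list))"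
  unfolding sorted_wrt_map by (erule sorted_wrt_mono_rel[rotated]) auto

lemma sum_list_map_pred: "\<forall>r\<in>set R. 0 < r \<Longrightarrow> sum_list (map (\<lambda>r. r - 1) R) + length R = sum_list R"
  by (induction R) auto

lemma sorted_wrt_map_nth:
  assumes "sorted_wrt (<) (xs :: 'a::order list)" "sorted_wrt (<) is" "\<forall>k\<in>set is. k < length xs"
  shows "sorted_wrt (<) (map ((!) xs) is)"
  unfolding sorted_wrt_map using assms(2)
  by (rule sorted_wrt_mono_rel[rotated]) (use assms(1,3) in \<open>auto intro: sorted_wrt_nth_less\<close>)

lemma pick_sorted:
  assumes "sorted_wrt (<) xs" "i < length xs"
  shows "pick (set xs) i = xs ! i"
  using assms(2)
proof (induction i)
  case 0
  show ?case
    unfolding pick.simps by (rule Least_equality) (use 0 sorted_wrt_less_nth_0_le[OF assms(1)] in auto)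
next
  case (Suc i)
  show ?case unfolding pick.simps Suc.IH[OF Suc_lessD[OF Suc.prems]]
  proof (rule Least_equality)
    show "xs ! Suc i \<in> set xs \<and> xs ! i < xs ! Suc i"
      using Suc.prems assms(1) by (simp add: sorted_wrt_nth_less)
    fix a assume "a \<in> set xs \<and> xs ! i < a"
    then obtain k where k: "k < length xs" "a = xs ! k" "xs ! i < xs ! k" by (auto simp: in_set_conv_nth)
    then have "i < k" using assms(1) Suc.prems
      by (metis Suc_lessD linorder_neqE_nat not_less_iff_gr_or_eq sorted_wrt_nth_less)
    then show "xs ! Suc i \<le> a" using k assms(1) by (metis Suc_leI le_less sorted_wrt_nth_less)
  qed
qed

lemma card_set_sorted_bounded:
  fixes xs :: "nat list"
  assumes "sorted_wrt (<) xs" "\<forall>x\<in>set xs. x < n"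
  shows "card {x. x < n \<and> x \<in> set xs} = length xs"
proof -
  have "{x. x < n \<and> x \<in> set xs} = set xs" using assms(2) by auto
  then show ?thesis using assms(1) strict_sorted_iff distinct_card by metis
qed

section \<open>Rank bounds and minors\<close>

lemma submatrix_sorted_lists:
  assumes "sorted_wrt (<) I" "sorted_wrt (<) J"
    and "\<forall>i\<in>set I. i < dim_row A" "\<forall>j\<in>set J. j < dim_col A"
  shows "submatrix A (set I) (set J) = mat (length I) (length J) (\<lambda>(i,j). A $$ (I!i, J!j))"
  using card_set_sorted_bounded[OF assms(1,3)] card_set_sorted_bounded[OF assms(2,4)]
  by (intro eq_matI) (auto simp: submatrix_def dim_submatrix pick_sorted assms(1,2))

lemma rank_ge_of_minor:
  fixes A :: "'a::field mat"
  assumes A: "A \<in> carrier_mat n nc" and "sorted_wrt (<) I" "sorted_wrt (<) J"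
    and "\<forall>i\<in>set I. i < n" "\<forall>j\<in>set J. j < nc"
    and "det (mat (length I) (length J) (\<lambda>(i,j). A $$ (I!i, J!j))) \<noteq> 0"
  shows "length J \<le> vec_space.rank n A"
  using vec_space.rank_gt_minor[OF A, of "set I" "set J"] assms submatrix_sorted_lists[of I J A]
    card_set_sorted_bounded[of J nc]
  by simp

lemma rank_le_of_sum_products:
  fixes A :: "'a::field mat"
  assumes "A \<in> carrier_mat n nc"
    and "\<And>i j. i < n \<Longrightarrow> j < nc \<Longrightarrow> A $$ (i,j) = (\<Sum>l<K. f l i * g l j)"
  shows "vec_space.rank n A \<le> K"
  using assms
proof (induction K arbitrary: A)
  case 0
  then have "A = 0\<^sub>m n nc" by (intro eq_matI) auto
  then show ?case using vec_space.rank_0I by simp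
next
  case (Suc K)
  define A1 where "A1 = mat n nc (\<lambda>(i,j). \<Sum>l<K. f l i * g l j)"
  define A2 where "A2 = mat n nc (\<lambda>(i,j). f K i * g K j)"
  have A1: "A1 \<in> carrier_mat n nc" and A2: "A2 \<in> carrier_mat n nc" unfolding A1_def A2_def by auto
  have "A = A1 + A2" using Suc.prems unfolding A1_def A2_def by (intro eq_matI) auto
  moreover have "vec_space.rank n A1 \<le> K" by (rule Suc.IH[OF A1]) (simp add: A1_def)
  moreover have "vec_space.rank n A2 \<le> 1"
    by (rule vec_space.rank_le_1_product_entries[OF A2, of "f K" "g K"]) (simp add: A2_def)
  ultimately show ?case using vec_space.rank_subadditive[OF A1 A2] by simp
qed

lemma rank_le_of_zero_block:
  fixes A :: "'a::field mat"
  assumes A: "A \<in> carrier_mat n nc" and s: "s \<le> nc"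
    and zero: "\<And>i j. k \<le> i \<Longrightarrow> i < n \<Longrightarrow> j < s \<Longrightarrow> A $$ (i,j) = 0"
  shows "vec_space.rank n A \<le> k + (nc - s)"
proof (rule rank_le_of_sum_products[OF A])
  \<comment> \<open>one piece per row above k, and one per column from s on, restricted to the rows from k on\<close>
  fix i j assume i: "i < n" and j: "j < nc"
  define f where "f = (\<lambda>l i. if l < k then (if i = l then 1 else 0)
    else if k \<le> i then A $$ (i, s + (l - k)) else 0)"
  define g where "g = (\<lambda>l j. if l < k then A $$ (l, j) else if j = s + (l - k) then 1 else 0)"
  have "(\<Sum>l<k + (nc - s). f l i * g l j) =
      (\<Sum>l\<in>{0..<k}. f l i * g l j) + (\<Sum>l\<in>{k..<k + (nc - s)}. f l i * g l j)"
    by (simp add: lessThan_atLeast0 sum.atLeastLessThan_concat)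
  also have "(\<Sum>l\<in>{0..<k}. f l i * g l j) = (\<Sum>l\<in>{0..<k}. if l = i then A $$ (i,j) else 0)"
    by (rule sum.cong) (auto simp: f_def g_def)
  also have "\<dots> = (if i < k then A $$ (i,j) else 0)" by simp
  also have "(\<Sum>l\<in>{k..<k + (nc - s)}. f l i * g l j) = (if k \<le> i \<and> s \<le> j then A $$ (i,j) else 0)"
  proof -
    have "(\<Sum>l\<in>{k..<k + (nc - s)}. f l i * g l j) =
        (\<Sum>l\<in>{k..<k + (nc - s)}. if l = k + (j - s) then (if k \<le> i \<and> s \<le> j then A $$ (i,j) else 0) else 0)"
      by (rule sum.cong) (auto simp: f_def g_def)
    also have "\<dots> = (if k \<le> i \<and> s \<le> j then A $$ (i,j) else 0)" using j s by auto
    finally show ?thesis .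
  qed
  finally show "A $$ (i,j) = (\<Sum>l<k + (nc - s). f l i * g l j)"
    using zero[OF _ i] by (cases "k \<le> i"; cases "s \<le> j") auto
qed

lemma det_scale_rows_cols:
  fixes M :: "'a::comm_ring_1 mat"
  assumes M: "M \<in> carrier_mat n n"
  shows "det (mat n n (\<lambda>(i,j). x i * M $$ (i,j) * y j)) = (\<Prod>i<n. x i) * (\<Prod>j<n. y j) * det M"
proof -
  let ?S = "mat n n (\<lambda>(i,j). x i * M $$ (i,j) * y j)"
  have diag_prod: "(\<Prod>i=0..<n. ?S $$ (i, p i)) = (\<Prod>i<n. x i) * (\<Prod>j<n. y j) * (\<Prod>i=0..<n. M $$ (i, p i))"
    if p: "p permutes {0..<n}" for p
  proof -
    have "(\<Prod>i=0..<n. y (p i)) = (\<Prod>j<n. y j)"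
      using prod.permute[OF p, of y] by (simp add: atLeast0LessThan comp_def)
    moreover have "p i < n" if "i < n" for i using permutes_in_image[OF p] that by simp
    ultimately show ?thesis by (simp add: prod.distrib atLeast0LessThan)
  qed
  have "det ?S = (\<Sum>p\<in>{p. p permutes {0..<n}}. signof p * (\<Prod>i=0..<n. ?S $$ (i, p i)))"
    by (rule det_def') simp
  also have "\<dots> = (\<Sum>p\<in>{p. p permutes {0..<n}}.
      signof p * ((\<Prod>i<n. x i) * (\<Prod>j<n. y j) * (\<Prod>i=0..<n. M $$ (i, p i))))"
    by (intro sum.cong refl) (simp only: diag_prod mem_Collect_eq)
  also have "\<dots> = (\<Prod>i<n. x i) * (\<Prod>j<n. y j) *
      (\<Sum>p\<in>{p. p permutes {0..<n}}. signof p * (\<Prod>i=0..<n. M $$ (i, p i)))"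
    by (simp add: sum_distrib_left ac_simps)
  also have "\<dots> = (\<Prod>i<n. x i) * (\<Prod>j<n. y j) * det M"
    by (simp add: det_def'[OF M])
  finally show ?thesis .
qed

section \<open>Determinants of interval binomial matrices\<close>

lemma sum_choose_atLeastLessThan:
  assumes "a \<le> b"
  shows "(\<Sum>t\<in>{a..<b}. real (t choose r)) = real (b choose Suc r) - real (a choose Suc r)"
  using assms by (induction b rule: dec_induct) simp_all

definition interval_binom_mat :: "nat list \<Rightarrow> nat list \<Rightarrow> nat list \<Rightarrow> real mat" where
  "interval_binom_mat R A B =
     mat (length A) (length R) (\<lambda>(i,j). \<Sum>t\<in>{A!i..<B!i}. real (t choose R!j))"

definition ordered_intervals :: "nat list \<Rightarrow> nat list \<Rightarrow> bool" where
  "ordered_intervals A B \<longleftrightarrow> length A = length B \<and> (\<forall>i<length A. A!i < B!i) \<and>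
     (\<forall>i. Suc i < length A \<longrightarrow> B!i \<le> A!Suc i)"

definition interval_binom_size :: "nat list \<Rightarrow> nat list \<Rightarrow> nat list \<Rightarrow> nat" where
  "interval_binom_size R A B = (\<Sum>i<length A. B!i - A!i) + sum_list R"

lemma interval_binom_mat_carrier: "interval_binom_mat R A B \<in> carrier_mat (length A) (length R)"
  unfolding interval_binom_mat_def by simp

lemma interval_binom_mat_index [simp]:
  "i < length A \<Longrightarrow> j < length R \<Longrightarrow>
   interval_binom_mat R A B $$ (i,j) = (\<Sum>t\<in>{A!i..<B!i}. real (t choose R!j))"
  unfolding interval_binom_mat_def by simp

lemma ordered_intervals_map_Suc_iff: "ordered_intervals A (map Suc A) \<longleftrightarrow> sorted_wrt (<) A"
  by (auto simp: ordered_intervals_def sorted_wrt_iff_nth_Suc_transp Suc_le_eq)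

lemma ordered_intervals_butlast_tl:
  "sorted_wrt (<) A \<Longrightarrow> ordered_intervals (butlast A) (tl A)"
  by (auto simp: ordered_intervals_def sorted_wrt_iff_nth_Suc_transp nth_butlast nth_tl)

lemma ordered_intervals_unit:
  assumes "ordered_intervals A B" "\<forall>i<length A. \<not> Suc (A!i) < B!i"
  shows "B = map Suc A"
proof -
  have "B!i = Suc (A!i)" if "i < length A" for i
    using assms that unfolding ordered_intervals_def by (metis Suc_lessI)
  then show ?thesis using assms(1) by (simp add: ordered_intervals_def nth_equalityI)
qed

lemma ordered_intervals_split:
  assumes "ordered_intervals A B" "i < length A" "A!i < b" "b < B!i"
  shows "ordered_intervals A (B[i := b])" "ordered_intervals (A[i := b]) B"
  using assms unfolding ordered_intervals_def
  by (auto simp: nth_list_update)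

lemma interval_binom_size_split:
  assumes "ordered_intervals A B" "i < length A" "A!i < b" "b < B!i"
  shows "interval_binom_size R A (B[i := b]) < interval_binom_size R A B"
    "interval_binom_size R (A[i := b]) B < interval_binom_size R A B"
proof -
  have lB: "length B = length A" using assms(1) by (simp add: ordered_intervals_def)
  have "(\<Sum>k<length A. B[i := b]!k - A!k) < (\<Sum>k<length A. B!k - A!k)"
    by (rule sum_strict_mono_ex1) (use assms lB in \<open>auto simp: nth_list_update intro!: bexI[of _ i]\<close>)
  then show "interval_binom_size R A (B[i := b]) < interval_binom_size R A B"
    by (simp add: interval_binom_size_def)
  have "(\<Sum>k<length A. B!k - A[i := b]!k) < (\<Sum>k<length A. B!k - A!k)"
    by (rule sum_strict_mono_ex1) (use assms lB in \<open>auto simp: nth_list_update intro!: bexI[of _ i]\<close>)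
  then show "interval_binom_size R (A[i := b]) B < interval_binom_size R A B"
    by (simp add: interval_binom_size_def)
qed

lemma interval_binom_size_map_Suc: "interval_binom_size R A (map Suc A) = length A + sum_list R"
  by (simp add: interval_binom_size_def)

lemma interval_binom_size_shift:
  assumes "A \<noteq> []" "length R = length A" "\<forall>r\<in>set R. 0 < r"
  shows "interval_binom_size (map (\<lambda>r. r - 1) R) (map (\<lambda>a. a - 1) A) (map Suc (map (\<lambda>a. a - 1) A))
    < interval_binom_size R A (map Suc A)"
  unfolding interval_binom_size_map_Suc using sum_list_map_pred[OF assms(3)] assms(1,2)
  by (simp flip: length_greater_0_conv)

lemma det_interval_binom_mat_split:
  assumes i: "i < length A" and lR: "length R = length A" and lB: "length B = length A"
    and b: "A!i < b" "b < B!i"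
  shows "det (interval_binom_mat R A B) =
    det (interval_binom_mat R A (B[i := b])) + det (interval_binom_mat R (A[i := b]) B)"
proof -
  let ?n = "length A"
  let ?row = "\<lambda>a b. vec ?n (\<lambda>j. \<Sum>t\<in>{a..<b}. real (t choose R!j))"
  let ?M = "\<lambda>v. mat\<^sub>r ?n ?n (\<lambda>k. if k = i then v else row (interval_binom_mat R A B) k)"
  have "det (?M (?row (A!i) b + ?row b (B!i))) = det (?M (?row (A!i) b)) + det (?M (?row b (B!i)))"
    by (rule det_row_add) (use i lR in \<open>auto simp: interval_binom_mat_def\<close>)
  moreover have "interval_binom_mat R A B = ?M (?row (A!i) b + ?row b (B!i))"
    by (rule eq_matI) (use b lR in \<open>auto simp: interval_binom_mat_def sum.atLeastLessThan_concat\<close>)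
  moreover have "interval_binom_mat R A (B[i := b]) = ?M (?row (A!i) b)"
    by (rule eq_matI) (auto simp: interval_binom_mat_def lR i lB)
  moreover have "interval_binom_mat R (A[i := b]) B = ?M (?row b (B!i))"
    by (rule eq_matI) (auto simp: interval_binom_mat_def lR i lB)
  ultimately show ?thesis by simp
qed

lemma det_unit_interval_binom_mat_diff:
  assumes ne: "A \<noteq> []" and lR: "length R = length A"
    and sR: "sorted_wrt (<) R" and sA: "sorted_wrt (<) A" and R0: "R!0 = 0"
  shows "det (interval_binom_mat R A (map Suc A)) =
    det (interval_binom_mat (map (\<lambda>r. r - 1) (tl R)) (butlast A) (tl A))"
proof -
  let ?n = "length A"
  let ?G = "interval_binom_mat R A (map Suc A)"
  \<comment> \<open>L subtracts from each row its predecessor; as R!0 = 0, column 0 of L * G becomes a unit vector\<close>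
  define L :: "real mat" where
    "L = mat ?n ?n (\<lambda>(i,k). if k = i then 1 else if Suc k = i then -1 else 0)"
  have G: "?G \<in> carrier_mat ?n ?n" using interval_binom_mat_carrier[of R A] lR by simp
  have L: "L \<in> carrier_mat ?n ?n" unfolding L_def by simp
  have LG: "L * ?G \<in> carrier_mat ?n ?n" using L G by simp
  have LG_index: "(L * ?G) $$ (i,j) = ?G $$ (i,j) - (if 0 < i then ?G $$ (i - 1, j) else 0)"
    if i: "i < ?n" and "j < ?n" for i j
  proof -
    have "(L * ?G) $$ (i,j) =
        (\<Sum>k<?n. (if k = i then ?G $$ (k,j) else 0) - (if Suc k = i then ?G $$ (k,j) else 0))"
      using that G by (auto simp: L_def scalar_prod_def atLeast0LessThan intro!: sum.cong)
    also have "\<dots> = ?G $$ (i,j) - (if 0 < i then ?G $$ (i - 1, j) else 0)"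
      using i by (cases i) (simp_all add: sum_subtractf)
    finally show ?thesis .
  qed
  have "det L = 1"
    by (subst det_lower_triangular[OF _ L]) (auto simp: L_def prod_list_diag_prod)
  then have "det ?G = det (L * ?G)" using det_mult[OF L G] by simp
  also have "\<dots> = (\<Sum>i<?n. (L * ?G) $$ (i,0) * cofactor (L * ?G) i 0)"
    by (rule laplace_expansion_column[OF LG]) (use ne in simp)
  also have "\<dots> = (\<Sum>i<?n. if i = 0 then cofactor (L * ?G) i 0 else 0)"
    using LG_index ne lR R0 by (intro sum.cong) auto
  also have "\<dots> = cofactor (L * ?G) 0 0" using ne by simp
  also have "\<dots> = det (mat_delete (L * ?G) 0 0)" by (simp add: cofactor_def)
  also have "mat_delete (L * ?G) 0 0 = interval_binom_mat (map (\<lambda>r. r - 1) (tl R)) (butlast A) (tl A)"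
  proof (rule eq_matI)
    fix i j assume "i < dim_row (interval_binom_mat (map (\<lambda>r. r - 1) (tl R)) (butlast A) (tl A))"
      and "j < dim_col (interval_binom_mat (map (\<lambda>r. r - 1) (tl R)) (butlast A) (tl A))"
    then have i: "Suc i < ?n" and j: "Suc j < ?n" using lR by (auto simp: interval_binom_mat_def)
    then have tl_len: "i < length (tl A)" "j < length (tl R)" using lR by simp_all
    have "R!0 < R!Suc j" using sR j lR by (simp add: sorted_wrt_nth_less)
    then obtain r where r: "R!Suc j = Suc r" using R0 by (metis gr0_implies_Suc)
    have "A!i \<le> A!Suc i" using sA i by (simp add: sorted_wrt_nth_less less_imp_le)
    then have "(L * ?G) $$ (Suc i, Suc j) = (\<Sum>t\<in>{A!i..<A!Suc i}. real (t choose r))"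
      using LG_index[OF i j] i j lR r by (simp add: sum_choose_atLeastLessThan)
    then show "mat_delete (L * ?G) 0 0 $$ (i,j) =
        interval_binom_mat (map (\<lambda>r. r - 1) (tl R)) (butlast A) (tl A) $$ (i,j)"
      using i j tl_len L G lR r by (simp add: mat_delete_def nth_butlast nth_tl)
  qed (use LG lR in \<open>auto simp: interval_binom_mat_def\<close>)
  finally show ?thesis .
qed

lemma det_unit_interval_binom_mat_zero_row:
  assumes lR: "length R = length A" and ne: "A \<noteq> []" and A0: "A!0 = 0"
    and Rpos: "\<forall>r\<in>set R. 0 < r"
  shows "det (interval_binom_mat R A (map Suc A)) = 0"
proof -
  let ?G = "interval_binom_mat R A (map Suc A)"
  have G: "?G \<in> carrier_mat (length A) (length A)" using interval_binom_mat_carrier[of R A] lR by simp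
  have "det ?G = (\<Sum>j<length A. ?G $$ (0,j) * cofactor ?G 0 j)"
    by (rule laplace_expansion_row[OF G]) (use ne in simp)
  also have "\<dots> = 0" using ne A0 lR Rpos by (auto intro!: sum.neutral)
  finally show ?thesis .
qed

lemma det_unit_interval_binom_mat_shift:
  assumes lR: "length R = length A" and Rpos: "\<forall>r\<in>set R. 0 < r" and Apos: "\<forall>a\<in>set A. 0 < a"
  shows "det (interval_binom_mat R A (map Suc A)) =
    (\<Prod>i<length A. real (A!i)) * (\<Prod>j<length A. 1 / real (R!j)) *
    det (interval_binom_mat (map (\<lambda>r. r - 1) R) (map (\<lambda>a. a - 1) A) (map Suc (map (\<lambda>a. a - 1) A)))"
proof -
  let ?n = "length A"
  let ?G' = "interval_binom_mat (map (\<lambda>r. r - 1) R) (map (\<lambda>a. a - 1) A) (map Suc (map (\<lambda>a. a - 1) A))"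
  have G': "?G' \<in> carrier_mat ?n ?n" using interval_binom_mat_carrier lR by (metis length_map)
  have scaled: "interval_binom_mat R A (map Suc A) =
      mat ?n ?n (\<lambda>(i,j). real (A!i) * ?G' $$ (i,j) * (1 / real (R!j)))"
  proof (rule eq_matI)
    fix i j assume "i < dim_row (mat ?n ?n (\<lambda>(i,j). real (A!i) * ?G' $$ (i,j) * (1 / real (R!j))))"
      "j < dim_col (mat ?n ?n (\<lambda>(i,j). real (A!i) * ?G' $$ (i,j) * (1 / real (R!j))))"
    then have i: "i < ?n" and j: "j < ?n" by auto
    obtain a r where a: "A!i = Suc a" and r: "R!j = Suc r"
      using Apos Rpos i j lR nth_mem by (metis gr0_implies_Suc)
    have "real (Suc a choose Suc r) * real (Suc r) = real (Suc a) * real (a choose r)"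
      by (metis Suc_times_binomial_eq of_nat_mult)
    then show "interval_binom_mat R A (map Suc A) $$ (i,j) =
        mat ?n ?n (\<lambda>(i,j). real (A!i) * ?G' $$ (i,j) * (1 / real (R!j))) $$ (i,j)"
      using i j lR a r by (simp add: field_simps)
  qed (use lR in \<open>auto simp: interval_binom_mat_def\<close>)
  show ?thesis
    unfolding scaled by (rule det_scale_rows_cols[OF G'])
qed

definition interval_det_nonneg_pos :: "nat list \<Rightarrow> nat list \<Rightarrow> nat list \<Rightarrow> bool" where
  "interval_det_nonneg_pos R A B \<longleftrightarrow> 0 \<le> det (interval_binom_mat R A B) \<and>
     ((\<forall>j<length R. R!j < B!j) \<longrightarrow> 0 < det (interval_binom_mat R A B))"

lemma interval_det_nonneg_pos_split:
  assumes "i < length A" "length R = length A" "length B = length A" "A!i < b" "b < B!i"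
    and "interval_det_nonneg_pos R A (B[i := b])" "interval_det_nonneg_pos R (A[i := b]) B"
  shows "interval_det_nonneg_pos R A B"
  using det_interval_binom_mat_split[OF assms(1-5)] assms(6,7)
  by (auto simp: interval_det_nonneg_pos_def)

lemma interval_det_nonneg_pos_diff:
  assumes ne: "A \<noteq> []" and lR: "length R = length A"
    and sR: "sorted_wrt (<) R" and sA: "sorted_wrt (<) A" and R0: "R!0 = 0"
    and reduced: "interval_det_nonneg_pos (map (\<lambda>r. r - 1) (tl R)) (butlast A) (tl A)"
  shows "interval_det_nonneg_pos R A (map Suc A)"
proof -
  let ?R' = "map (\<lambda>r. r - 1) (tl R)"
  have Rpos: "\<forall>r\<in>set (tl R). 0 < r" using sR ne lR R0 by (cases R) auto
  have "\<forall>j<length ?R'. ?R'!j < tl A!j" if all: "\<forall>j<length R. R!j < map Suc A ! j"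
  proof (intro allI impI)
    fix j assume j: "j < length ?R'"
    then have "R!Suc j < Suc (A!Suc j)" using lR all by auto
    moreover have "0 < R!Suc j" using Rpos nth_mem[of j "tl R"] j by (simp add: nth_tl)
    ultimately show "?R'!j < tl A!j" using j lR by (simp add: nth_tl)
  qed
  then show ?thesis
    using reduced det_unit_interval_binom_mat_diff[OF ne lR sR sA R0]
    by (simp add: interval_det_nonneg_pos_def)
qed

lemma interval_det_nonneg_pos_zero_row:
  assumes "length R = length A" "A \<noteq> []" "A!0 = 0" "\<forall>r\<in>set R. 0 < r"
  shows "interval_det_nonneg_pos R A (map Suc A)"
proof -
  have "0 < R!0" using assms(1,2,4) by (simp add: nth_mem)
  then show ?thesis
    using det_unit_interval_binom_mat_zero_row[OF assms] assms(1-3)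
    by (auto simp: interval_det_nonneg_pos_def)
qed

lemma interval_det_nonneg_pos_shift:
  assumes lR: "length R = length A" and Rpos: "\<forall>r\<in>set R. 0 < r" and Apos: "\<forall>a\<in>set A. 0 < a"
    and reduced: "interval_det_nonneg_pos (map (\<lambda>r. r - 1) R) (map (\<lambda>a. a - 1) A)
      (map Suc (map (\<lambda>a. a - 1) A))"
  shows "interval_det_nonneg_pos R A (map Suc A)"
proof -
  define c where "c = (\<Prod>i<length A. real (A!i)) * (\<Prod>j<length A. 1 / real (R!j))"
  have pos: "0 < A!i" "0 < R!i" if "i < length A" for i
    using Rpos Apos that lR by (simp_all add: nth_mem)
  have "0 < c" unfolding c_def by (intro mult_pos_pos prod_pos) (simp_all add: pos)
  moreover have "(\<forall>j<length R. R!j < Suc (A!j)) \<longrightarrow> (\<forall>j<length R. R!j - 1 < Suc (A!j - 1))"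
    by auto
  ultimately show ?thesis
    using reduced det_unit_interval_binom_mat_shift[OF lR Rpos Apos, folded c_def] lR
    by (auto simp: interval_det_nonneg_pos_def intro: mult_nonneg_nonneg mult_pos_pos)
qed

lemma interval_det_nonneg_pos_if_ordered:
  assumes "length R = length A" "sorted_wrt (<) R" "ordered_intervals A B"
  shows "interval_det_nonneg_pos R A B"
  using assms
proof (induction "(length A, interval_binom_size R A B)" arbitrary: R A B rule: less_induct)
  case (less R A B)
  note IH = less.hyps
  have lR: "length R = length A" and sR: "sorted_wrt (<) R" and iv: "ordered_intervals A B"
    using less.prems by auto
  have lB: "length B = length A" using iv by (simp add: ordered_intervals_def)
  show ?case
  proof (cases "\<exists>i<length A. Suc (A!i) < B!i")
    case True
    then obtain i where i: "i < length A" and long: "Suc (A!i) < B!i" by blast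
    define b where "b = B!i - 1"
    have b: "A!i < b" "b < B!i" using long by (auto simp: b_def)
    show ?thesis
    proof (rule interval_det_nonneg_pos_split[OF i lR lB b])
      show "interval_det_nonneg_pos R A (B[i := b])"
        using IH[OF _ lR sR ordered_intervals_split(1)[OF iv i b]] interval_binom_size_split(1)[OF iv i b]
        by simp
      show "interval_det_nonneg_pos R (A[i := b]) B"
        using IH[OF _ _ sR ordered_intervals_split(2)[OF iv i b]] interval_binom_size_split(2)[OF iv i b] lR
        by simp
    qed
  next
    case False
    then have B: "B = map Suc A" using ordered_intervals_unit[OF iv] by blast
    have sA: "sorted_wrt (<) A" using iv B ordered_intervals_map_Suc_iff by simp
    consider "A = []" | "A \<noteq> []" "R!0 = 0" | "A \<noteq> []" "0 < R!0" "A!0 = 0" | "A \<noteq> []" "0 < R!0" "0 < A!0"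
      by auto
    then show ?thesis
    proof cases
      case 1
      then have "interval_binom_mat R A B = 1\<^sub>m 0" using lR by (auto simp: interval_binom_mat_def)
      then show ?thesis by (simp add: interval_det_nonneg_pos_def)
    next
      case 2
      have "\<forall>r\<in>set (tl R). 0 < r" "sorted_wrt (<) (tl R)" using sR 2 lR by (cases R; simp)+
      then have "sorted_wrt (<) (map (\<lambda>r. r - 1) (tl R))" by (rule sorted_wrt_map_pred)
      then show ?thesis
        unfolding B using 2 IH[OF _ _ _ ordered_intervals_butlast_tl[OF sA]] lR
        by (intro interval_det_nonneg_pos_diff[OF _ lR sR sA]) simp_all
    next
      case 3
      then show ?thesis
        unfolding B using sorted_wrt_less_nth_0_le[OF sR]
        by (intro interval_det_nonneg_pos_zero_row[OF lR]) (auto intro: less_le_trans)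
    next
      case 4
      have Rpos: "\<forall>r\<in>set R. 0 < r" using 4 sorted_wrt_less_nth_0_le[OF sR] by (meson less_le_trans)
      have Apos: "\<forall>a\<in>set A. 0 < a" using 4 sorted_wrt_less_nth_0_le[OF sA] by (meson less_le_trans)
      have "ordered_intervals (map (\<lambda>a. a - 1) A) (map Suc (map (\<lambda>a. a - 1) A))"
        unfolding ordered_intervals_map_Suc_iff by (rule sorted_wrt_map_pred[OF Apos sA])
      then have "interval_det_nonneg_pos (map (\<lambda>r. r - 1) R) (map (\<lambda>a. a - 1) A)
          (map Suc (map (\<lambda>a. a - 1) A))"
        using IH[OF _ _ sorted_wrt_map_pred[OF Rpos sR]] interval_binom_size_shift[OF 4(1) lR Rpos] lR B
        by simp
      then show ?thesis
        unfolding B by (rule interval_det_nonneg_pos_shift[OF lR Rpos Apos])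
    qed
  qed
qed

section \<open>Ranks of Pascal submatrices\<close>

lemma pascal_sub_index [simp]:
  "i < length r \<Longrightarrow> j < length c \<Longrightarrow> pascal_sub r c $$ (i,j) = real (c!j choose r!i)"
  unfolding pascal_sub_def by simp

lemma pascal_sub_eq_transpose: "pascal_sub R C = (interval_binom_mat R C (map Suc C))\<^sup>T"
  by (rule eq_matI) (auto simp: pascal_sub_def interval_binom_mat_def)

lemma det_pascal_sub_pos:
  assumes sR: "sorted_wrt (<) R" and sC: "sorted_wrt (<) C" and l: "length R = length C"
    and le: "\<forall>i<length R. R!i \<le> C!i"
  shows "0 < det (pascal_sub R C)"
proof -
  have "0 < det (interval_binom_mat R C (map Suc C))"
    using interval_det_nonneg_pos_if_ordered[OF l sR] sC le l
    by (simp add: interval_det_nonneg_pos_def ordered_intervals_map_Suc_iff le_imp_less_Suc)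
  moreover have "interval_binom_mat R C (map Suc C) \<in> carrier_mat (length C) (length C)"
    using interval_binom_mat_carrier[of R C] l by simp
  ultimately show ?thesis by (simp add: pascal_sub_eq_transpose det_transpose)
qed

lemma det_pascal_sub_subpair_pos:
  assumes sr: "sorted_wrt (<) r" and sc: "sorted_wrt (<) c" and sub: "ordered_subpair_idx r c \<alpha> \<beta>"
  shows "0 < det (pascal_sub (map ((!) r) \<alpha>) (map ((!) c) \<beta>))"
  using sub sorted_wrt_map_nth[OF sr] sorted_wrt_map_nth[OF sc]
  by (intro det_pascal_sub_pos) (auto simp: ordered_subpair_idx_def)

lemma mrank_pascal_sub_subpair:
  assumes "sorted_wrt (<) r" "sorted_wrt (<) c" "ordered_subpair_idx r c \<alpha> \<beta>"
  shows "mrank (pascal_sub (map ((!) r) \<alpha>) (map ((!) c) \<beta>)) = length \<alpha>"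
proof -
  let ?T = "pascal_sub (map ((!) r) \<alpha>) (map ((!) c) \<beta>)"
  have T: "?T \<in> carrier_mat (length \<alpha>) (length \<alpha>)"
    using assms(3) by (simp add: pascal_sub_def ordered_subpair_idx_def)
  have "det ?T \<noteq> 0" using det_pascal_sub_subpair_pos[OF assms] by simp
  then show ?thesis using vec_space.det_rank_iff[OF T] T by (simp add: mrank_def)
qed

lemma pascal_sub_minor:
  assumes "\<forall>k\<in>set \<alpha>. k < length r" "\<forall>k\<in>set \<beta>. k < length c"
  shows "mat (length \<alpha>) (length \<beta>) (\<lambda>(i,j). pascal_sub r c $$ (\<alpha>!i, \<beta>!j)) =
    pascal_sub (map ((!) r) \<alpha>) (map ((!) c) \<beta>)"
  using assms by (intro eq_matI) (auto simp: pascal_sub_def)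

lemma rank_pascal_sub_le_max_subpair:
  assumes sr: "sorted_wrt (<) r" and sc: "sorted_wrt (<) c"
    and max: "\<forall>\<alpha> \<beta>. ordered_subpair_idx r c \<alpha> \<beta> \<longrightarrow> length \<alpha> \<le> q"
  shows "vec_space.rank (length r) (pascal_sub r c) \<le> q"
proof -
  let ?P = "pascal_sub r c" and ?n = "length c"
  have P: "?P \<in> carrier_mat (length r) ?n" by (simp add: pascal_sub_def)
  consider "length r \<le> q" | "?n \<le> q" | "q < length r" "q < ?n" by linarith
  then show ?thesis
  proof cases
    case 1
    then show ?thesis using rank_le_of_zero_block[OF P, of ?n "length r"] by simp
  next
    case 2
    then show ?thesis using vec_space.rank_le_nc[OF P] by simp
  next
    case 3
    \<comment> \<open>the first q+1 rows cannot be matched with the last q+1 columns\<close>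
    have "\<not> ordered_subpair_idx r c [0..<Suc q] [?n - Suc q..<?n]" using max by fastforce
    then obtain k where k: "k \<le> q" and gap: "c ! (?n - Suc q + k) < r ! k"
      using 3 by (auto simp: ordered_subpair_idx_def sorted_wrt_iff_nth_less not_le less_Suc_eq_le simp del: upt_Suc)
    have "vec_space.rank (length r) ?P \<le> k + (?n - (?n - q + k))"
    proof (rule rank_le_of_zero_block[OF P])
      fix i j assume i: "k \<le> i" "i < length r" and j: "j < ?n - q + k"
      have "c ! j \<le> c ! (?n - Suc q + k)"
        using sorted_nth_mono[OF strict_sorted_imp_sorted[OF sc]] j k 3 by simp
      moreover have "r ! k \<le> r ! i"
        using sorted_nth_mono[OF strict_sorted_imp_sorted[OF sr]] i by simp
      ultimately show "?P $$ (i,j) = 0" using gap i j k 3 by simp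
    qed (use 3 k in simp)
    then show ?thesis using 3 k by simp
  qed
qed

lemma mrank_pascal_sub_maximal:
  assumes sr: "sorted_wrt (<) r" and sc: "sorted_wrt (<) c" and max: "maximal_subpair_idx r c \<alpha> \<beta>"
  shows "mrank (pascal_sub r c) = length \<alpha>"
proof -
  have sub: "ordered_subpair_idx r c \<alpha> \<beta>" using max by (simp add: maximal_subpair_idx_def)
  then have l: "length \<beta> = length \<alpha>" and s\<alpha>: "sorted_wrt (<) \<alpha>" and s\<beta>: "sorted_wrt (<) \<beta>"
    and r\<alpha>: "\<forall>k\<in>set \<alpha>. k < length r" and r\<beta>: "\<forall>k\<in>set \<beta>. k < length c"
    by (auto simp: ordered_subpair_idx_def)
  have P: "pascal_sub r c \<in> carrier_mat (length r) (length c)" by (simp add: pascal_sub_def)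
  have "length \<beta> \<le> vec_space.rank (length r) (pascal_sub r c)"
    using det_pascal_sub_subpair_pos[OF sr sc sub]
    by (intro rank_ge_of_minor[OF P s\<alpha> s\<beta> r\<alpha> r\<beta>]) (simp add: pascal_sub_minor[OF r\<alpha> r\<beta>])
  moreover have "vec_space.rank (length r) (pascal_sub r c) \<le> length \<alpha>"
    using max by (intro rank_pascal_sub_le_max_subpair[OF sr sc]) (simp add: maximal_subpair_idx_def)
  ultimately show ?thesis using l by (simp add: mrank_def pascal_sub_def)
qed

lemma I_mat_index_eq_sum:
  assumes "distinct \<alpha>" "length \<beta> = length \<alpha>" "i < length r" "j < length c"
  shows "I_mat r c \<alpha> \<beta> $$ (i,j) =
    (\<Sum>l<length \<alpha>. (if i = \<alpha>!l then 1 else 0) * (if j = \<beta>!l then 1 else 0))"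
proof (cases "\<exists>k<length \<alpha>. \<alpha>!k = i \<and> \<beta>!k = j")
  case True
  then obtain k where k: "k < length \<alpha>" "\<alpha>!k = i" "\<beta>!k = j" by blast
  have "(\<Sum>l<length \<alpha>. (if i = \<alpha>!l then 1 else 0) * (if j = \<beta>!l then 1 else 0)) =
      (\<Sum>l<length \<alpha>. if l = k then 1 else (0::real))"
    using k nth_eq_iff_index_eq[OF assms(1)] by (intro sum.cong) auto
  then show ?thesis using True k assms(3,4) by (simp add: I_mat_def)
next
  case False
  then have "(\<Sum>l<length \<alpha>. (if i = \<alpha>!l then 1 else 0) * (if j = \<beta>!l then 1 else 0)) = (0::real)"
    by (intro sum.neutral) auto
  then show ?thesis using False assms(3,4) by (simp add: I_mat_def)
qed

lemma mrank_I_mat: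
  assumes s\<alpha>: "sorted_wrt (<) \<alpha>" and s\<beta>: "sorted_wrt (<) \<beta>" and l: "length \<beta> = length \<alpha>"
    and r\<alpha>: "\<forall>k\<in>set \<alpha>. k < length r" and r\<beta>: "\<forall>k\<in>set \<beta>. k < length c"
  shows "mrank (I_mat r c \<alpha> \<beta>) = length \<alpha>"
proof -
  let ?I = "I_mat r c \<alpha> \<beta>"
  have I: "?I \<in> carrier_mat (length r) (length c)" by (simp add: I_mat_def)
  have "vec_space.rank (length r) ?I \<le> length \<alpha>"
    using I_mat_index_eq_sum[of \<alpha> \<beta>] s\<alpha> l
    by (intro rank_le_of_sum_products[OF I]) (simp add: strict_sorted_iff)
  moreover have "length \<beta> \<le> vec_space.rank (length r) ?I"
  proof (rule rank_ge_of_minor[OF I s\<alpha> s\<beta> r\<alpha> r\<beta>])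
    have "mat (length \<alpha>) (length \<beta>) (\<lambda>(i,j). ?I $$ (\<alpha>!i, \<beta>!j)) = 1\<^sub>m (length \<alpha>)"
      using s\<alpha> s\<beta> l r\<alpha> r\<beta> nth_eq_iff_index_eq[of \<alpha>] nth_eq_iff_index_eq[of \<beta>]
      by (intro eq_matI) (auto simp: I_mat_def strict_sorted_iff)
    then show "det (mat (length \<alpha>) (length \<beta>) (\<lambda>(i,j). ?I $$ (\<alpha>!i, \<beta>!j))) \<noteq> 0" by simp
  qed
  ultimately show ?thesis using I l by (simp add: mrank_def)
qed

theorem corollary1:
  fixes r c \<alpha> \<beta> :: "nat list" and p :: nat
  assumes "selection r" and "r \<noteq> []"
    and "selection c" and "c \<noteq> []"
    and "ordered_subpair_idx r c \<alpha> \<beta>"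
    and "length \<alpha> = p + 1"
  shows "mrank (pascal_sub (map ((!) r) \<alpha>) (map ((!) c) \<beta>)) = mrank (I_mat r c \<alpha> \<beta>)
       \<and> mrank (I_mat r c \<alpha> \<beta>) = p + 1
       \<and> (maximal_subpair_idx r c \<alpha> \<beta> \<longrightarrow> mrank (pascal_sub r c) = mrank (I_mat r c \<alpha> \<beta>))"
proof -
  have sr: "sorted_wrt (<) r" and sc: "sorted_wrt (<) c" using assms(1,3) by (simp_all add: selection_def)
  have "mrank (pascal_sub (map ((!) r) \<alpha>) (map ((!) c) \<beta>)) = length \<alpha>"
    by (rule mrank_pascal_sub_subpair[OF sr sc assms(5)])
  moreover have "mrank (I_mat r c \<alpha> \<beta>) = length \<alpha>"
    using assms(5) by (intro mrank_I_mat) (auto simp: ordered_subpair_idx_def)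
  moreover have "maximal_subpair_idx r c \<alpha> \<beta> \<longrightarrow> mrank (pascal_sub r c) = length \<alpha>"
    using mrank_pascal_sub_maximal[OF sr sc] by blast
  ultimately show ?thesis using assms(6) by simp
qed

end
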